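(* Let $G$ be a discrete group, $\mathbf k\subseteq{\rm Seq}(\mathbf C)$ a $\sigma$-subring with constants $\mathbf C$, $\alpha\in\mathcal C_c(G,\mathbf k)$, and consider the solutions of $\sigma(s)=\alpha\star s$ in $\mathcal C(G,{\rm Seq}(\mathbf C))$, equipped with the topology of pointwise convergence on $\mathbf Z_{\ge0}\times G$. Then: (a) ${\rm Sol}_c(\alpha,L^c)$ is dense in ${\rm Sol}(\alpha,L)$; (b) ${\rm Sol}_{\rm per}(\alpha,L^{\rm per})$ is dense in ${\rm Sol}(\alpha,L)$ if and only if $G$ is residually finite; (c) if $G$ is not finite, ${\rm Sol}_c(\alpha,L^c)\cap{\rm Sol}_{\rm per}(\alpha,L^{\rm per})=\{0\}$; (d) if $G$ is finite, ${\rm Sol}(\alpha,L)={\rm Sol}_c(\alpha,L^c)={\rm Sol}_{\rm per}(\alpha,L^{\rm per})\simeq\mathbf C^{|G|}$.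
   Context: ${\rm Seq}(\mathbf C)$: complex sequences indexed by $t\in\mathbf Z_{\ge0}$ with shift $\sigma(x)^{(t)}=x^{(t+1)}$. The equation $\sigma(s)=\alpha\star s$ means $s_g^{(t+1)}=\sum_{h\in G}\alpha^{(t)}_hs^{(t)}_{h^{-1}g}$. ${\rm Sol}(\alpha,L)$ is the $\mathbf C$-space of all solutions; ${\rm Sol}_c(\alpha,L^c)$ those with $s^{(t)}$ of finite support for every $t$; ${\rm Sol}_{\rm per}(\alpha,L^{\rm per})$ those which are $H$-periodic ($s_{gh}=s_g$ for all $g\in G,h\in H$) for some normal subgroup $H$ of finite index in $G$. *)

theory Defs
  imports "HOL-Analysis.Analysis"
begin

text \<open>Sequences Seq(C) are functions nat => complex; the shift is sigma.
  The (possibly non-commutative) group G is a type of class group_add,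
  written additively: the product g h is g + h, h^{-1} is -h, the unit is 0.\<close>

definition shift :: "(nat \<Rightarrow> complex) \<Rightarrow> (nat \<Rightarrow> complex)" where
  "shift x = (\<lambda>t. x (Suc t))"

definition sigma_subring_const_C :: "(nat \<Rightarrow> complex) set \<Rightarrow> bool" where
  "sigma_subring_const_C k \<longleftrightarrow>
     (\<lambda>t. 0) \<in> k \<and> (\<lambda>t. 1) \<in> k \<and>
     (\<forall>x\<in>k. \<forall>y\<in>k. (\<lambda>t. x t + y t) \<in> k \<and> (\<lambda>t. x t * y t) \<in> k) \<and>
     (\<forall>x\<in>k. (\<lambda>t. - x t) \<in> k) \<and>
     (\<forall>x\<in>k. shift x \<in> k) \<and>
     {x\<in>k. shift x = x} = range (\<lambda>c::complex. \<lambda>t::nat. c)"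

definition supp :: "('g \<Rightarrow> nat \<Rightarrow> complex) \<Rightarrow> 'g set" where
  "supp \<alpha> = {h. \<alpha> h \<noteq> (\<lambda>t. 0)}"

definition Cc :: "(nat \<Rightarrow> complex) set \<Rightarrow> ('g \<Rightarrow> nat \<Rightarrow> complex) set" where
  "Cc k = {\<alpha>. finite (supp \<alpha>) \<and> (\<forall>h. \<alpha> h \<in> k)}"

definition Sol :: "('g::group_add \<Rightarrow> nat \<Rightarrow> complex) \<Rightarrow> ('g \<Rightarrow> nat \<Rightarrow> complex) set" where
  "Sol \<alpha> = {s. \<forall>t g. s g (Suc t) = (\<Sum>h\<in>supp \<alpha>. \<alpha> h t * s (- h + g) t)}"

definition Sol_c :: "('g::group_add \<Rightarrow> nat \<Rightarrow> complex) \<Rightarrow> ('g \<Rightarrow> nat \<Rightarrow> complex) set" where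
  "Sol_c \<alpha> = {s \<in> Sol \<alpha>. \<forall>t. finite {g. s g t \<noteq> 0}}"

definition normal_subgroup :: "'g::group_add set \<Rightarrow> bool" where
  "normal_subgroup H \<longleftrightarrow> 0 \<in> H \<and> (\<forall>x\<in>H. \<forall>y\<in>H. x + y \<in> H) \<and> (\<forall>x\<in>H. - x \<in> H)
     \<and> (\<forall>g. \<forall>h\<in>H. g + h + - g \<in> H)"

definition finite_index :: "'g::group_add set \<Rightarrow> bool" where
  "finite_index H \<longleftrightarrow> finite ((\<lambda>g. (\<lambda>h. g + h) ` H) ` UNIV)"

definition residually_finite :: "'g::group_add itself \<Rightarrow> bool" where
  "residually_finite _ \<longleftrightarrow>
     (\<forall>g::'g. g \<noteq> 0 \<longrightarrow> (\<exists>H. normal_subgroup H \<and> finite_index H \<and> g \<notin> H))"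

definition Sol_per :: "('g::group_add \<Rightarrow> nat \<Rightarrow> complex) \<Rightarrow> ('g \<Rightarrow> nat \<Rightarrow> complex) set" where
  "Sol_per \<alpha> = {s \<in> Sol \<alpha>. \<exists>H. normal_subgroup H \<and> finite_index H \<and>
      (\<forall>g. \<forall>h\<in>H. s (g + h) = s g)}"

end

theory Submission imports Defs begin

text \<open>A solution is determined by its initial value \<open>s(\<cdot>,0)\<close>, and every initial value
  extends to a solution; moreover \<open>s g t\<close> only depends on the initial value on the finite
  set of points reachable from \<open>g\<close> in \<open>t\<close> backward steps through \<open>supp \<alpha>\<close>.  Hence a solution
  is approximated by the solutions whose initial values agree with its own on larger and
  larger finite sets \<open>F\<close>.  Truncating the initial value to \<open>F\<close> gives finitely supported
  solutions; if \<open>G\<close> is residually finite, there is a finite-index normal subgroup \<open>H\<close> that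
  separates the points of \<open>F\<close>, and extending the initial value \<open>H\<close>-periodically from \<open>F\<close> gives
  periodic solutions.  Conversely, if \<open>g\<^sub>0 \<noteq> 0\<close> lies in every finite-index normal subgroup,
  every periodic solution satisfies the closed condition \<open>s g\<^sub>0 0 = s 0 0\<close>, which the
  solution with initial value the indicator of \<open>g\<^sub>0\<close> violates.  A periodic function with
  finite support on an infinite group vanishes, and for finite \<open>G\<close> everything collapses.\<close>

lemma tendsto_coordinatewise_iff:
  fixes f :: "'a \<Rightarrow> 'b \<Rightarrow> 'c::topological_space"
  shows "(f \<longlongrightarrow> l) F \<longleftrightarrow> (\<forall>i. ((\<lambda>x. f x i) \<longlongrightarrow> l i) F)"
proof -
  have "(f \<longlongrightarrow> l) F \<longleftrightarrow> limitin (product_topology (\<lambda>i. euclidean) UNIV) f l F"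
    by (simp add: euclidean_product_topology)
  also have "\<dots> \<longleftrightarrow> (\<forall>i. ((\<lambda>x. f x i) \<longlongrightarrow> l i) F)"
    by (subst limitin_componentwise) simp
  finally show ?thesis .
qed

lemma closure_if_eventually_coordinatewise_eq:
  fixes s :: "'a \<Rightarrow> 'b \<Rightarrow> 'c::topological_space"
  assumes "F \<noteq> bot"
    and "eventually (\<lambda>x. ap x \<in> A) F"
    and "\<And>i j. eventually (\<lambda>x. ap x i j = s i j) F"
  shows "s \<in> closure A"
proof (rule Lim_in_closed_set[OF closed_closure _ assms(1)])
  show "(ap \<longlongrightarrow> s) F"
    unfolding tendsto_coordinatewise_iff using assms(3) by (auto intro: tendsto_eventually)
  show "eventually (\<lambda>x. ap x \<in> closure A) F"
    using assms(2) by (rule eventually_mono) (use closure_subset in blast)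
qed

lemma continuous_on_apply2:
  "continuous_on UNIV (\<lambda>f::'a \<Rightarrow> 'b \<Rightarrow> 'c::topological_space. f i j)"
  by (rule continuous_on_product_then_coordinatewise[where f="\<lambda>f. f i"])
     (rule continuous_on_product_coordinates)

primrec evolve :: "('g::group_add \<Rightarrow> nat \<Rightarrow> complex) \<Rightarrow> ('g \<Rightarrow> complex) \<Rightarrow> nat \<Rightarrow> 'g \<Rightarrow> complex"
where
  "evolve \<alpha> x 0 = x"
| "evolve \<alpha> x (Suc t) = (\<lambda>g. \<Sum>h\<in>supp \<alpha>. \<alpha> h t * evolve \<alpha> x t (- h + g))"

definition sol_from :: "('g::group_add \<Rightarrow> nat \<Rightarrow> complex) \<Rightarrow> ('g \<Rightarrow> complex) \<Rightarrow> 'g \<Rightarrow> nat \<Rightarrow> complex"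
  where "sol_from \<alpha> x = (\<lambda>g t. evolve \<alpha> x t g)"

lemma sol_from_in_Sol: "sol_from \<alpha> x \<in> Sol \<alpha>"
  by (simp add: Sol_def sol_from_def)

lemma sol_from_initial [simp]: "sol_from \<alpha> x g 0 = x g"
  by (simp add: sol_from_def)

primrec dependence_set :: "('g::group_add \<Rightarrow> nat \<Rightarrow> complex) \<Rightarrow> nat \<Rightarrow> 'g \<Rightarrow> 'g set" where
  "dependence_set \<alpha> 0 g = {g}"
| "dependence_set \<alpha> (Suc t) g = (\<Union>h\<in>supp \<alpha>. dependence_set \<alpha> t (- h + g))"

lemma finite_dependence_set: "finite (supp \<alpha>) \<Longrightarrow> finite (dependence_set \<alpha> t g)"
  by (induction t arbitrary: g) auto

lemma Sol_eq_if_initial_eq_on_dependence_set: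
  assumes "s \<in> Sol \<alpha>" "s' \<in> Sol \<alpha>" "\<forall>g'\<in>dependence_set \<alpha> t g. s g' 0 = s' g' 0"
  shows "s g t = s' g t"
  using assms(3)
proof (induction t arbitrary: g)
  case 0
  then show ?case by simp
next
  case (Suc t)
  have "s g (Suc t) = (\<Sum>h\<in>supp \<alpha>. \<alpha> h t * s (- h + g) t)"
    using assms(1) by (simp add: Sol_def)
  also have "\<dots> = (\<Sum>h\<in>supp \<alpha>. \<alpha> h t * s' (- h + g) t)"
    using Suc by (intro sum.cong) auto
  also have "\<dots> = s' g (Suc t)"
    using assms(2) by (simp add: Sol_def)
  finally show ?case .
qed

lemma Sol_eqI:
  assumes "s \<in> Sol \<alpha>" "s' \<in> Sol \<alpha>" "\<And>g. s g 0 = s' g 0"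
  shows "s = s'"
  using Sol_eq_if_initial_eq_on_dependence_set[OF assms(1,2)] assms(3) by blast

lemma bij_betw_initial_Sol: "bij_betw (\<lambda>s g. s g 0) (Sol \<alpha>) UNIV"
proof (rule bij_betw_imageI)
  show "inj_on (\<lambda>s g. s g 0) (Sol \<alpha>)"
    by (rule inj_onI) (metis Sol_eqI)
  have "x \<in> (\<lambda>s g. s g 0) ` Sol \<alpha>" for x :: "'a \<Rightarrow> complex"
    using sol_from_in_Sol[of \<alpha> x] by (intro image_eqI[where x="sol_from \<alpha> x"]) auto
  then show "(\<lambda>s g. s g 0) ` Sol \<alpha> = UNIV" by blast
qed

lemma Sol_in_closure_if_initial_approx:
  assumes fin: "finite (supp \<alpha>)" and s: "s \<in> Sol \<alpha>"
    and approx: "\<And>F. finite F \<Longrightarrow> \<exists>p \<in> A \<inter> Sol \<alpha>. \<forall>g\<in>F. p g 0 = s g 0"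
  shows "s \<in> closure A"
proof -
  define ap where "ap F = (SOME p. p \<in> A \<inter> Sol \<alpha> \<and> (\<forall>g\<in>F. p g 0 = s g 0))" for F
  have ap: "ap F \<in> A" "ap F \<in> Sol \<alpha>" "\<forall>g\<in>F. ap F g 0 = s g 0" if "finite F" for F
    using someI_ex[OF approx[OF that, unfolded Bex_def]] by (auto simp: ap_def)
  show ?thesis
  proof (rule closure_if_eventually_coordinatewise_eq[of "finite_subsets_at_top UNIV" ap])
    show "eventually (\<lambda>F. ap F \<in> A) (finite_subsets_at_top UNIV)"
      using ap(1) by (rule eventually_finite_subsets_at_top_weakI)
    fix g t
    show "eventually (\<lambda>F. ap F g t = s g t) (finite_subsets_at_top UNIV)"
      unfolding eventually_finite_subsets_at_top
    proof (intro exI conjI allI impI)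
      show "finite (dependence_set \<alpha> t g)"
        using fin by (rule finite_dependence_set)
      fix F assume "finite F \<and> dependence_set \<alpha> t g \<subseteq> F \<and> F \<subseteq> UNIV"
      then show "ap F g t = s g t"
        using ap(2,3) by (intro Sol_eq_if_initial_eq_on_dependence_set[OF _ s]) auto
    qed simp
  qed simp
qed

lemma finite_support_evolve:
  assumes "finite (supp \<alpha>)" "finite {g. x g \<noteq> 0}"
  shows "finite {g. evolve \<alpha> x t g \<noteq> 0}"
proof (induction t)
  case 0
  then show ?case using assms by simp
next
  case (Suc t)
  have "{g. evolve \<alpha> x (Suc t) g \<noteq> 0} \<subseteq> (\<lambda>(h, g). h + g) ` (supp \<alpha> \<times> {g. evolve \<alpha> x t g \<noteq> 0})"
  proof
    fix g assume "g \<in> {g. evolve \<alpha> x (Suc t) g \<noteq> 0}"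
    then obtain h where "h \<in> supp \<alpha>" "evolve \<alpha> x t (- h + g) \<noteq> 0"
      by (auto elim: sum.not_neutral_contains_not_neutral)
    then show "g \<in> (\<lambda>(h, g). h + g) ` (supp \<alpha> \<times> {g. evolve \<alpha> x t g \<noteq> 0})"
      by (intro image_eqI[where x="(h, - h + g)"]) (auto simp: add.assoc[symmetric])
  qed
  moreover have "finite ((\<lambda>(h, g). h + g) ` (supp \<alpha> \<times> {g. evolve \<alpha> x t g \<noteq> 0}))"
    using Suc assms(1) by auto
  ultimately show ?case
    by (rule finite_subset)
qed

lemma Sol_subset_closure_Sol_c:
  assumes "finite (supp \<alpha>)"
  shows "Sol \<alpha> \<subseteq> closure (Sol_c \<alpha>)"
proof
  fix s assume s: "s \<in> Sol \<alpha>"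
  show "s \<in> closure (Sol_c \<alpha>)"
  proof (rule Sol_in_closure_if_initial_approx[OF assms s])
    fix F :: "'a set" assume "finite F"
    then have "finite {g. (if g \<in> F then s g 0 else 0) \<noteq> 0}"
      by (rule finite_subset[rotated]) auto
    then have "sol_from \<alpha> (\<lambda>g. if g \<in> F then s g 0 else 0) \<in> Sol_c \<alpha>"
      using finite_support_evolve[OF assms] sol_from_in_Sol
      by (simp add: Sol_c_def sol_from_def)
    then show "\<exists>p \<in> Sol_c \<alpha> \<inter> Sol \<alpha>. \<forall>g\<in>F. p g 0 = s g 0"
      by (intro bexI[where x="sol_from \<alpha> (\<lambda>g. if g \<in> F then s g 0 else 0)"])
         (auto simp: Sol_c_def)
  qed
qed

lemma normal_subgroup_UNIV: "normal_subgroup (UNIV :: 'g::group_add set)"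
  by (simp add: normal_subgroup_def)

lemma finite_index_UNIV: "finite_index (UNIV :: 'g::group_add set)"
proof -
  have "range ((+) g) = UNIV" for g :: 'g
    by (metis add_minus_cancel surj_def)
  then have "(\<lambda>g::'g. (+) g ` UNIV) ` UNIV = {UNIV}" by auto
  then show ?thesis by (simp add: finite_index_def)
qed

lemma normal_subgroup_Int:
  "normal_subgroup H1 \<Longrightarrow> normal_subgroup H2 \<Longrightarrow> normal_subgroup (H1 \<inter> H2)"
  by (simp add: normal_subgroup_def)

lemma finite_index_Int:
  fixes H1 :: "'g::group_add set"
  assumes "finite_index H1" "finite_index H2"
  shows "finite_index (H1 \<inter> H2)"
proof -
  let ?C1 = "(\<lambda>g. (+) g ` H1) ` UNIV" and ?C2 = "(\<lambda>g. (+) g ` H2) ` UNIV"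
  have "(+) g ` (H1 \<inter> H2) = (+) g ` H1 \<inter> (+) g ` H2" for g
    by (intro image_Int) (simp add: inj_on_def)
  then have "(\<lambda>g. (+) g ` (H1 \<inter> H2)) ` UNIV \<subseteq> (\<lambda>(A, B). A \<inter> B) ` (?C1 \<times> ?C2)"
    by auto
  moreover have "finite ((\<lambda>(A, B). A \<inter> B) ` (?C1 \<times> ?C2))"
    using assms by (simp add: finite_index_def)
  ultimately show ?thesis
    unfolding finite_index_def by (rule finite_subset)
qed

lemma residually_finite_avoid_finite:
  assumes "residually_finite TYPE('g::group_add)" "finite X" "(0::'g) \<notin> X"
  shows "\<exists>H. normal_subgroup H \<and> finite_index H \<and> X \<inter> H = {}"
  using assms(2,3)
proof (induction X rule: finite_induct)
  case empty
  then show ?case using normal_subgroup_UNIV finite_index_UNIV by blast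
next
  case (insert x X)
  then obtain H where "normal_subgroup H" "finite_index H" "X \<inter> H = {}" by auto
  moreover obtain H' where "normal_subgroup H'" "finite_index H'" "x \<notin> H'"
    using assms(1) insert.prems unfolding residually_finite_def by auto
  ultimately have "normal_subgroup (H \<inter> H') \<and> finite_index (H \<inter> H') \<and> insert x X \<inter> (H \<inter> H') = {}"
    by (auto intro: normal_subgroup_Int finite_index_Int)
  then show ?case by blast
qed

lemma residually_finite_separates_finite:
  assumes "residually_finite TYPE('g::group_add)" "finite (F :: 'g set)"
  shows "\<exists>H. normal_subgroup H \<and> finite_index H \<and> (\<forall>a\<in>F. \<forall>b\<in>F. - a + b \<in> H \<longrightarrow> a = b)"
proof -
  define X where "X = {- a + b | a b. a \<in> F \<and> b \<in> F \<and> a \<noteq> b}"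
  have "X \<subseteq> (\<lambda>(a, b). - a + b) ` (F \<times> F)"
    by (auto simp: X_def)
  then have "finite X"
    using assms(2) by (auto intro: finite_subset)
  moreover have "0 \<notin> X"
    by (auto simp: X_def) (metis add_minus_cancel add.right_neutral)
  ultimately obtain H where "normal_subgroup H" "finite_index H" "X \<inter> H = {}"
    using residually_finite_avoid_finite[OF assms(1)] by meson
  moreover have "a = b" if "a \<in> F" "b \<in> F" "- a + b \<in> H" "X \<inter> H = {}" for a b
    using that unfolding X_def by blast
  ultimately show ?thesis by blast
qed

definition periodic_extension :: "'g::group_add set \<Rightarrow> 'g set \<Rightarrow> ('g \<Rightarrow> complex) \<Rightarrow> 'g \<Rightarrow> complex"
  where "periodic_extension H F x g =
    (if \<exists>a\<in>F. - a + g \<in> H then x (SOME a. a \<in> F \<and> - a + g \<in> H) else 0)"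

lemma periodic_extension_periodic:
  assumes "normal_subgroup H" "h \<in> H"
  shows "periodic_extension H F x (g + h) = periodic_extension H F x g"
proof -
  have "- a + (g + h) \<in> H \<longleftrightarrow> - a + g \<in> H" for a
  proof
    assume "- a + (g + h) \<in> H"
    then have "- a + (g + h) + - h \<in> H"
      using assms unfolding normal_subgroup_def by blast
    then show "- a + g \<in> H" by (simp only: add.assoc add.right_inverse add_0_right)
  next
    assume "- a + g \<in> H"
    then show "- a + (g + h) \<in> H"
      using assms unfolding normal_subgroup_def by (metis add.assoc)
  qed
  then show ?thesis by (simp add: periodic_extension_def)
qed

lemma periodic_extension_eq:
  assumes "0 \<in> H" "\<forall>a\<in>F. \<forall>b\<in>F. - a + b \<in> H \<longrightarrow> a = b" "g \<in> F"
  shows "periodic_extension H F x g = x g"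
proof -
  have "(SOME a. a \<in> F \<and> - a + g \<in> H) = g"
    using assms by (intro some_equality) auto
  then show ?thesis
    using assms by (auto simp: periodic_extension_def)
qed

lemma evolve_periodic:
  assumes "\<And>g. x (g + h) = x g"
  shows "evolve \<alpha> x t (g + h) = evolve \<alpha> x t g"
  using assms by (induction t arbitrary: g) (simp_all add: add.assoc[symmetric])

lemma sol_from_in_Sol_per:
  assumes "normal_subgroup H" "finite_index H" "\<And>g h. h \<in> H \<Longrightarrow> x (g + h) = x g"
  shows "sol_from \<alpha> x \<in> Sol_per \<alpha>"
proof -
  have "sol_from \<alpha> x (g + h) = sol_from \<alpha> x g" if "h \<in> H" for g h
    unfolding sol_from_def using evolve_periodic[of x h] assms(3)[OF that] by simp
  then show ?thesis
    unfolding Sol_per_def using assms(1,2) sol_from_in_Sol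
    by (intro CollectI conjI exI[of _ H]) auto
qed

lemma Sol_subset_closure_Sol_per:
  assumes "finite (supp \<alpha>)" and rf: "residually_finite TYPE('g::group_add)"
  shows "Sol (\<alpha> :: 'g \<Rightarrow> nat \<Rightarrow> complex) \<subseteq> closure (Sol_per \<alpha>)"
proof
  fix s assume s: "s \<in> Sol \<alpha>"
  show "s \<in> closure (Sol_per \<alpha>)"
  proof (rule Sol_in_closure_if_initial_approx[OF assms(1) s])
    fix F :: "'g set" assume "finite F"
    then obtain H where H: "normal_subgroup H" "finite_index H"
      and sep: "\<forall>a\<in>F. \<forall>b\<in>F. - a + b \<in> H \<longrightarrow> a = b"
      using residually_finite_separates_finite[OF rf] by metis
    let ?x = "periodic_extension H F (\<lambda>g. s g 0)"
    have "sol_from \<alpha> ?x \<in> Sol_per \<alpha>"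
      by (rule sol_from_in_Sol_per[OF H]) (rule periodic_extension_periodic[OF H(1)])
    moreover have "\<forall>g\<in>F. sol_from \<alpha> ?x g 0 = s g 0"
      using periodic_extension_eq[OF _ sep] H(1) by (simp add: normal_subgroup_def)
    ultimately show "\<exists>p \<in> Sol_per \<alpha> \<inter> Sol \<alpha>. \<forall>g\<in>F. p g 0 = s g 0"
      using sol_from_in_Sol by blast
  qed
qed

lemma residually_finite_if_Sol_subset_closure_Sol_per:
  assumes "Sol (\<alpha> :: 'g::group_add \<Rightarrow> nat \<Rightarrow> complex) \<subseteq> closure (Sol_per \<alpha>)"
  shows "residually_finite TYPE('g)"
proof (rule ccontr)
  assume "\<not> residually_finite TYPE('g)"
  then obtain g0 :: 'g where g0: "g0 \<noteq> 0"
    and in_all: "\<And>H. normal_subgroup H \<Longrightarrow> finite_index H \<Longrightarrow> g0 \<in> H"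
    unfolding residually_finite_def by blast
  let ?S = "{f :: 'g \<Rightarrow> nat \<Rightarrow> complex. f g0 0 = f 0 0}"
  have "closed ?S"
    by (intro closed_Collect_eq continuous_on_apply2)
  moreover have "Sol_per \<alpha> \<subseteq> ?S"
  proof
    fix p assume "p \<in> Sol_per \<alpha>"
    then obtain H where H: "normal_subgroup H" "finite_index H" "\<forall>g. \<forall>h\<in>H. p (g + h) = p g"
      unfolding Sol_per_def by auto
    then have "p (0 + g0) = p 0"
      using in_all[OF H(1,2)] by blast
    then show "p \<in> ?S" by simp
  qed
  ultimately have "closure (Sol_per \<alpha>) \<subseteq> ?S"
    by (rule closure_minimal[rotated])
  then have "sol_from \<alpha> (\<lambda>g. if g = g0 then 1 else 0) \<in> ?S"
    using assms sol_from_in_Sol by blast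
  then show False
    using g0 by simp
qed

lemma infinite_if_finite_index:
  assumes "infinite (UNIV :: 'g::group_add set)" "finite_index H" "0 \<in> (H :: 'g set)"
  shows "infinite H"
proof
  assume "finite H"
  then have "finite (\<Union>g. (+) g ` H)"
    using assms(2) unfolding finite_index_def by blast
  moreover have "(\<Union>g. (+) g ` H) = UNIV"
    using assms(3) by (auto intro!: image_eqI[where x=0])
  ultimately show False
    using assms(1) by simp
qed

lemma periodic_finite_support_eq_0:
  fixes f :: "'g::group_add \<Rightarrow> 'c::zero"
  assumes "infinite H" "\<And>g h. h \<in> H \<Longrightarrow> f (g + h) = f g" "finite {g. f g \<noteq> 0}"
  shows "f g = 0"
proof (rule ccontr)
  assume "f g \<noteq> 0"
  then have "(+) g ` H \<subseteq> {g. f g \<noteq> 0}"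
    using assms(2) by auto
  then have "finite ((+) g ` H)"
    using assms(3) by (rule finite_subset)
  then show False
    using assms(1) by (simp add: finite_image_iff inj_on_def)
qed

lemma Sol_c_Int_Sol_per:
  assumes "infinite (UNIV :: 'g::group_add set)"
  shows "Sol_c (\<alpha> :: 'g \<Rightarrow> nat \<Rightarrow> complex) \<inter> Sol_per \<alpha> = {\<lambda>g t. 0}"
proof
  show "{\<lambda>g t. 0} \<subseteq> Sol_c \<alpha> \<inter> Sol_per \<alpha>"
    using normal_subgroup_UNIV finite_index_UNIV by (auto simp: Sol_def Sol_c_def Sol_per_def)
  show "Sol_c \<alpha> \<inter> Sol_per \<alpha> \<subseteq> {\<lambda>g t. 0}"
  proof
    fix s assume s: "s \<in> Sol_c \<alpha> \<inter> Sol_per \<alpha>"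
    then obtain H where H: "normal_subgroup H" "finite_index H" "\<forall>g. \<forall>h\<in>H. s (g + h) = s g"
      unfolding Sol_per_def by blast
    have "infinite H"
      using infinite_if_finite_index[OF assms H(2)] H(1) by (simp add: normal_subgroup_def)
    then have "s g t = 0" for g t
      using H(3) s by (intro periodic_finite_support_eq_0[where f="\<lambda>g. s g t"]) (auto simp: Sol_c_def)
    then show "s \<in> {\<lambda>g t. 0}" by auto
  qed
qed

lemma Sol_eq_Sol_c_finite:
  "finite (UNIV :: 'g::group_add set) \<Longrightarrow> Sol (\<alpha> :: 'g \<Rightarrow> nat \<Rightarrow> complex) = Sol_c \<alpha>"
  by (auto simp: Sol_c_def intro: finite_subset)

lemma Sol_c_eq_Sol_per_finite:
  assumes "finite (UNIV :: 'g::group_add set)"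
  shows "Sol_c (\<alpha> :: 'g \<Rightarrow> nat \<Rightarrow> complex) = Sol_per \<alpha>"
proof -
  have "normal_subgroup {0::'g}" "finite_index {0::'g}"
    using assms by (simp_all add: normal_subgroup_def finite_index_def)
  then show ?thesis
    using Sol_eq_Sol_c_finite[OF assms] by (auto simp: Sol_per_def Sol_c_def)
qed

theorem proposition1p13:
  fixes k :: "(nat \<Rightarrow> complex) set"
    and \<alpha> :: "'g::group_add \<Rightarrow> nat \<Rightarrow> complex"
  assumes "sigma_subring_const_C k"
    and "\<alpha> \<in> Cc k"
  shows "(Sol \<alpha> \<subseteq> closure (Sol_c \<alpha>)) \<and>
         (Sol \<alpha> \<subseteq> closure (Sol_per \<alpha>) \<longleftrightarrow> residually_finite TYPE('g)) \<and>
         (infinite (UNIV :: 'g set) \<longrightarrow> Sol_c \<alpha> \<inter> Sol_per \<alpha> = {\<lambda>g t. 0}) \<and>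
         (finite (UNIV :: 'g set) \<longrightarrow>
           Sol \<alpha> = Sol_c \<alpha> \<and> Sol_c \<alpha> = Sol_per \<alpha> \<and>
           (\<exists>f :: ('g \<Rightarrow> nat \<Rightarrow> complex) \<Rightarrow> ('g \<Rightarrow> complex).
              bij_betw f (Sol \<alpha>) UNIV \<and>
              (\<forall>a b s s'. s \<in> Sol \<alpha> \<longrightarrow> s' \<in> Sol \<alpha> \<longrightarrow>
                 f (\<lambda>g t. a * s g t + b * s' g t) = (\<lambda>g. a * f s g + b * f s' g))))"
proof -
  have fin: "finite (supp \<alpha>)"
    using assms(2) by (simp add: Cc_def)
  show ?thesis
  proof (intro conjI impI)
    show "Sol \<alpha> \<subseteq> closure (Sol_c \<alpha>)"
      using fin by (rule Sol_subset_closure_Sol_c)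
    show "Sol \<alpha> \<subseteq> closure (Sol_per \<alpha>) \<longleftrightarrow> residually_finite TYPE('g)"
      by (rule iffI[OF residually_finite_if_Sol_subset_closure_Sol_per Sol_subset_closure_Sol_per[OF fin]])
    show "Sol_c \<alpha> \<inter> Sol_per \<alpha> = {\<lambda>g t. 0}" if "infinite (UNIV :: 'g set)"
      using that by (rule Sol_c_Int_Sol_per)
    show "Sol \<alpha> = Sol_c \<alpha>" if "finite (UNIV :: 'g set)"
      using that by (rule Sol_eq_Sol_c_finite)
    show "Sol_c \<alpha> = Sol_per \<alpha>" if "finite (UNIV :: 'g set)"
      using that by (rule Sol_c_eq_Sol_per_finite)
    show "\<exists>f :: ('g \<Rightarrow> nat \<Rightarrow> complex) \<Rightarrow> ('g \<Rightarrow> complex).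
        bij_betw f (Sol \<alpha>) UNIV \<and>
        (\<forall>a b s s'. s \<in> Sol \<alpha> \<longrightarrow> s' \<in> Sol \<alpha> \<longrightarrow>
           f (\<lambda>g t. a * s g t + b * s' g t) = (\<lambda>g. a * f s g + b * f s' g))"
      using bij_betw_initial_Sol by (intro exI[of _ "\<lambda>s g. s g 0"]) auto
  qed
qed

end
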